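(* Let $G$ be an infinite group. Then (i) $BR_G$ is a translation invariant ideal in $\mathcal{P}_G$; (ii) $BR_G^{\wedge}$ is a closed ideal of the semigroup $\beta G$, and an ultrafilter $p\in\beta G$ belongs to $BR_G^{\wedge}$ if and only if every member $P\in p$ contains an $(n,n)$-rectangle for every $n\in\mathbb{N}$; (iii) $BR_G\subsetneq FT_G$.
   Context: For $X,Y\subseteq G$, the product $XY$ is an $(n,m)$-rectangle if $|X|=n$, $|Y|=m$; a set $A$ has (contains) an $(n,m)$-rectangle if $XY\subseteq A$ for some such $X,Y$. $A$ has bounded rectangles if there is $n\in\mathbb{N}$ such that $A$ contains no $(n,n)$-rectangle; $BR_G$ is the family of such sets. An ideal in $\mathcal{P}_G$ is a family closed under finite unions and subsets not containing $G$; it is translation invariant if $gA,Ag$ belong to it whenever $A$ does. $A$ is $n$-thin if $g_0A\cap\dots\cap g_nA$ is finite for all distinct $g_0,\dots,g_n$; $FT_G$ is the family of sets that are $n$-thin for some $n$. $\beta G$ is the semigroup of ultrafilters on $G$, and $\mathcal{I}^{\wedge}=\{p\in\beta G: G\setminus A\in p$ for each $A\in\mathcal{I}\}$. *)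

theory Defs
  imports Main
begin

text \<open>The group G is written additively as a type of class group_add
  (not necessarily commutative); the paper's product xy is x + y.\<close>

definition setprod :: "'a::group_add set \<Rightarrow> 'a set \<Rightarrow> 'a set" where
  "setprod X Y = {x + y | x y. x \<in> X \<and> y \<in> Y}"

definition ltrans :: "'a::group_add \<Rightarrow> 'a set \<Rightarrow> 'a set" where
  "ltrans g A = (\<lambda>a. g + a) ` A"

definition rtrans :: "'a set \<Rightarrow> 'a::group_add \<Rightarrow> 'a set" where
  "rtrans A g = (\<lambda>a. a + g) ` A"

definition has_rectangle :: "'a::group_add set \<Rightarrow> nat \<Rightarrow> nat \<Rightarrow> bool" where
  "has_rectangle A n m \<longleftrightarrow>
     (\<exists>X Y. finite X \<and> finite Y \<and> card X = n \<and> card Y = m \<and> setprod X Y \<subseteq> A)"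

definition BR :: "'a::group_add set set" where
  "BR = {A. \<exists>n. \<not> has_rectangle A n n}"

definition thin :: "nat \<Rightarrow> 'a::group_add set \<Rightarrow> bool" where
  "thin n A \<longleftrightarrow> (\<forall>F. finite F \<and> card F = Suc n \<longrightarrow> finite (\<Inter>g\<in>F. ltrans g A))"

definition FT :: "'a::group_add set set" where
  "FT = {A. \<exists>n. thin n A}"

definition set_ideal :: "'a set set \<Rightarrow> bool" where
  "set_ideal I \<longleftrightarrow>
     (\<forall>A\<in>I. \<forall>B\<in>I. A \<union> B \<in> I) \<and> (\<forall>A\<in>I. \<forall>B. B \<subseteq> A \<longrightarrow> B \<in> I) \<and> UNIV \<notin> I"

definition translation_invariant :: "'a::group_add set set \<Rightarrow> bool" where
  "translation_invariant I \<longleftrightarrow> (\<forall>A\<in>I. \<forall>g. ltrans g A \<in> I \<and> rtrans A g \<in> I)"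

text \<open>Ultrafilters on G, represented as families of subsets; beta G is the set of them.\<close>
definition is_ultrafilter :: "'a set set \<Rightarrow> bool" where
  "is_ultrafilter p \<longleftrightarrow>
     UNIV \<in> p \<and> {} \<notin> p \<and>
     (\<forall>A B. A \<in> p \<and> A \<subseteq> B \<longrightarrow> B \<in> p) \<and>
     (\<forall>A B. A \<in> p \<and> B \<in> p \<longrightarrow> A \<inter> B \<in> p) \<and>
     (\<forall>A. A \<in> p \<or> - A \<in> p)"

definition betaG :: "'a set set set" where
  "betaG = {p. is_ultrafilter p}"

text \<open>Semigroup operation on beta G: A \<in> p q iff {x. x^{-1}A \<in> q} \<in> p.\<close>
definition uprod :: "'a::group_add set set \<Rightarrow> 'a set set \<Rightarrow> 'a set set" where
  "uprod p q = {A. {x. {y. x + y \<in> A} \<in> q} \<in> p}"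

text \<open>Closed subsets of beta G (Stone topology, basic open sets {p. A \<in> p}).\<close>
definition beta_closed :: "'a set set set \<Rightarrow> bool" where
  "beta_closed U \<longleftrightarrow> U \<subseteq> betaG \<and>
     (\<forall>p\<in>betaG. p \<notin> U \<longrightarrow> (\<exists>A\<in>p. \<forall>q\<in>U. A \<notin> q))"

definition semigroup_ideal :: "'a::group_add set set set \<Rightarrow> bool" where
  "semigroup_ideal L \<longleftrightarrow> L \<subseteq> betaG \<and> L \<noteq> {} \<and>
     (\<forall>p\<in>betaG. \<forall>q\<in>L. uprod p q \<in> L \<and> uprod q p \<in> L)"

definition hat :: "'a set set \<Rightarrow> 'a set set set" where
  "hat I = {p\<in>betaG. \<forall>A\<in>I. - A \<in> p}"

end

theory Submission
  imports Defs "HOL-Library.FuncSet"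
begin

text \<open>
  (i) If \<open>A \<union> B\<close> contains a large rectangle \<open>XY\<close>, fix \<open>2n\<close> columns of \<open>Y\<close>. By the pigeonhole
  principle \<open>n\<close> rows of \<open>X\<close> meet \<open>A\<close> in the same set \<open>S\<close> of these columns, and \<open>S\<close> or its
  complement has \<open>n\<close> elements, which gives an \<open>(n,n)\<close>-rectangle in \<open>A\<close> or in \<open>B\<close>.
  Translates of rectangles are rectangles.

  (ii) For every ideal \<open>I\<close> the set \<open>I\<^sup>\<and>\<close> is closed and nonempty, and it is a two-sided ideal of
  \<open>\<beta>G\<close> as soon as \<open>I\<close> is left invariant and stable under \<open>A \<mapsto> {x. -x + A \<in> q}\<close> for every
  ultrafilter \<open>q\<close>. For \<open>BR\<close> the latter holds because a finite rectangle inside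
  \<open>{x. -x + A \<in> q}\<close> is translated into \<open>A\<close> by a common point of finitely many members of \<open>q\<close>.

  (iii) If \<open>\<Inter>\<^sub>g\<^sub>\<in>\<^sub>F gA\<close> is infinite for some \<open>F\<close> with \<open>n + 1\<close> elements, then \<open>(-F)\<close> times any
  \<open>n + 1\<close> of its points is a rectangle in \<open>A\<close>; so \<open>BR \<subseteq> FT\<close>. For properness, take a union of
  \<open>k \<times> k\<close>-rectangles, \<open>k = 0, 1, 2, \<dots>\<close>, each chosen greedily so that it creates no difference
  \<open>b - a\<close> present before. Every nonzero \<open>h\<close> then has only finitely many representations
  \<open>h = b - a\<close>, so the union is 1-thin while it contains arbitrarily large rectangles.
\<close>

section \<open>Rectangles and translations\<close>

lemma setprod_mono: "X \<subseteq> X' \<Longrightarrow> Y \<subseteq> Y' \<Longrightarrow> setprod X Y \<subseteq> setprod X' Y'"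
  unfolding setprod_def by blast

lemma finite_setprod:
  assumes "finite X" "finite Y"
  shows "finite (setprod X Y)"
proof -
  have "setprod X Y = (\<lambda>(x, y). x + y) ` (X \<times> Y)"
    unfolding setprod_def by auto
  then show ?thesis
    using assms by simp
qed

lemma has_rectangle_0: "has_rectangle A 0 0"
  unfolding has_rectangle_def setprod_def by (intro exI[of _ "{}"]) auto

lemma has_rectangle_subset: "has_rectangle B n m \<Longrightarrow> B \<subseteq> A \<Longrightarrow> has_rectangle A n m"
  unfolding has_rectangle_def by blast

lemma has_rectangle_mono:
  assumes "has_rectangle A n m" "n' \<le> n" "m' \<le> m"
  shows "has_rectangle A n' m'"
proof -
  obtain X Y where XY: "finite X" "finite Y" "card X = n" "card Y = m" "setprod X Y \<subseteq> A"
    using assms(1) unfolding has_rectangle_def by blast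
  obtain X' where "X' \<subseteq> X" "card X' = n'" "finite X'"
    using obtain_subset_with_card_n[of n' X] XY assms(2) by auto
  moreover obtain Y' where "Y' \<subseteq> Y" "card Y' = m'" "finite Y'"
    using obtain_subset_with_card_n[of m' Y] XY assms(3) by auto
  ultimately show ?thesis
    unfolding has_rectangle_def using setprod_mono XY(5) by (metis order_trans)
qed

lemma has_rectangle_UNIV:
  assumes "infinite (UNIV :: 'a::group_add set)"
  shows "has_rectangle (UNIV :: 'a set) n n"
  using infinite_arbitrarily_large[OF assms, of n] unfolding has_rectangle_def by blast

lemma has_rectangle_Un:
  assumes "has_rectangle (A \<union> B) (4 ^ n * n) (4 ^ n * n)"
  shows "has_rectangle A n n \<or> has_rectangle B n n"
proof -
  have "2 * n \<le> 4 ^ n * n"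
  proof (cases n)
    case (Suc k)
    then have "2 \<le> (4::nat) ^ n"
      by (simp add: Suc_le_eq)
    then show ?thesis
      by simp
  qed simp
  then have "has_rectangle (A \<union> B) (4 ^ n * n) (2 * n)"
    using has_rectangle_mono[OF assms] by blast
  then obtain X Y where XY: "finite X" "finite Y" "card X = 4 ^ n * n" "card Y = 2 * n"
      and XY_sub: "setprod X Y \<subseteq> A \<union> B"
    unfolding has_rectangle_def by blast
  define row where "row x = {y \<in> Y. x + y \<in> A}" for x
  have "row \<in> X \<rightarrow> Pow Y" "finite (Pow Y)" "Pow Y \<noteq> {}"
    unfolding row_def using XY by auto
  from pigeonhole_card[OF this(1) XY(1) this(2,3)]
  obtain S where S: "S \<subseteq> Y" and "card (row -` {S} \<inter> X) * card (Pow Y) \<ge> card X"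
    by blast
  then have "card (row -` {S} \<inter> X) \<ge> n"
    using XY by (simp add: card_Pow power_mult)
  then obtain X' where "X' \<subseteq> row -` {S} \<inter> X" "finite X'" "card X' = n"
    by (rule obtain_subset_with_card_n)
  then have X': "X' \<subseteq> X" "finite X'" "card X' = n" "\<forall>x\<in>X'. row x = S"
    by auto
  have "card (Y - S) = card Y - card S" "card S \<le> card Y"
    using S XY(2) by (auto intro: card_Diff_subset card_mono finite_subset)
  then have "card S + card (Y - S) = 2 * n"
    using XY(4) by linarith
  then consider "card S \<ge> n" | "card (Y - S) \<ge> n"
    by linarith
  then show ?thesis
  proof cases
    case 1
    then obtain Y' where "Y' \<subseteq> S" "card Y' = n" "finite Y'"
      by (rule obtain_subset_with_card_n)
    moreover from this have "setprod X' Y' \<subseteq> A"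
      using X' unfolding setprod_def row_def by blast
    ultimately show ?thesis
      unfolding has_rectangle_def using X' by blast
  next
    case 2
    then obtain Y' where "Y' \<subseteq> Y - S" "card Y' = n" "finite Y'"
      by (rule obtain_subset_with_card_n)
    moreover from this have "setprod X' Y' \<subseteq> B"
      using X' XY_sub unfolding setprod_def row_def by blast
    ultimately show ?thesis
      unfolding has_rectangle_def using X' by blast
  qed
qed

lemma ltrans_ltrans: "ltrans g (ltrans h A) = ltrans (g + h) A"
  unfolding ltrans_def by (auto simp: image_image add.assoc)

lemma rtrans_rtrans: "rtrans (rtrans A h) g = rtrans A (h + g)"
  unfolding rtrans_def by (auto simp: image_image add.assoc)

lemma ltrans_0 [simp]: "ltrans 0 A = A"
  unfolding ltrans_def by simp

lemma rtrans_0 [simp]: "rtrans A 0 = A"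
  unfolding rtrans_def by simp

lemma ltrans_minus: "ltrans (- x) A = {y. x + y \<in> A}"
  unfolding ltrans_def by (force simp: add.assoc)

lemma ltrans_mono: "A \<subseteq> B \<Longrightarrow> ltrans g A \<subseteq> ltrans g B"
  unfolding ltrans_def by (rule image_mono)

lemma rtrans_mono: "A \<subseteq> B \<Longrightarrow> rtrans A g \<subseteq> rtrans B g"
  unfolding rtrans_def by (rule image_mono)

lemma card_ltrans [simp]: "card (ltrans g A) = card A"
  unfolding ltrans_def by (simp add: card_image)

lemma card_rtrans [simp]: "card (rtrans A g) = card A"
  unfolding rtrans_def by (simp add: card_image)

lemma finite_ltrans_iff [simp]: "finite (ltrans g A) \<longleftrightarrow> finite A"
  unfolding ltrans_def by (simp add: finite_image_iff)

lemma finite_rtrans_iff [simp]: "finite (rtrans A g) \<longleftrightarrow> finite A"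
  unfolding rtrans_def by (simp add: finite_image_iff)

lemma setprod_ltrans: "setprod (ltrans g X) Y = ltrans g (setprod X Y)"
  unfolding setprod_def ltrans_def by (auto simp: add.assoc image_iff) (metis add.assoc)+

lemma setprod_rtrans: "setprod X (rtrans Y g) = rtrans (setprod X Y) g"
  unfolding setprod_def rtrans_def by (force simp: add.assoc)

lemma has_rectangle_ltrans: "has_rectangle A n m \<Longrightarrow> has_rectangle (ltrans g A) n m"
  unfolding has_rectangle_def by (metis card_ltrans finite_ltrans_iff ltrans_mono setprod_ltrans)

lemma has_rectangle_rtrans: "has_rectangle A n m \<Longrightarrow> has_rectangle (rtrans A g) n m"
  unfolding has_rectangle_def by (metis card_rtrans finite_rtrans_iff rtrans_mono setprod_rtrans)

lemma has_rectangle_ltrans_iff: "has_rectangle (ltrans g A) n m \<longleftrightarrow> has_rectangle A n m"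
  using has_rectangle_ltrans[of "ltrans g A" n m "- g"] has_rectangle_ltrans[of A n m g]
  by (auto simp: ltrans_ltrans)

lemma has_rectangle_rtrans_iff: "has_rectangle (rtrans A g) n m \<longleftrightarrow> has_rectangle A n m"
  using has_rectangle_rtrans[of "rtrans A g" n m "- g"] has_rectangle_rtrans[of A n m g]
  by (auto simp: rtrans_rtrans)

section \<open>The ideal \<open>BR\<close>\<close>

lemma not_in_BR_iff: "A \<notin> BR \<longleftrightarrow> (\<forall>n. has_rectangle A n n)"
  unfolding BR_def by blast

lemma empty_in_BR: "{} \<in> BR"
proof -
  have "\<not> has_rectangle {} 1 1"
    unfolding has_rectangle_def setprod_def by (auto simp: card_1_singleton_iff)
  then show ?thesis
    unfolding BR_def by blast
qed

lemma BR_subset: "A \<in> BR \<Longrightarrow> B \<subseteq> A \<Longrightarrow> B \<in> BR"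
  unfolding BR_def using has_rectangle_subset by blast

lemma BR_Un:
  assumes "A \<in> BR" "B \<in> BR"
  shows "A \<union> B \<in> BR"
proof -
  obtain n m where "\<not> has_rectangle A n n" "\<not> has_rectangle B m m"
    using assms unfolding BR_def by blast
  then have "\<not> has_rectangle A (max n m) (max n m)" "\<not> has_rectangle B (max n m) (max n m)"
    using has_rectangle_mono by (metis max.cobounded1 max.cobounded2)+
  then show ?thesis
    unfolding BR_def using has_rectangle_Un by blast
qed

lemma UNIV_notin_BR:
  assumes "infinite (UNIV :: 'a::group_add set)"
  shows "(UNIV :: 'a set) \<notin> BR"
  using has_rectangle_UNIV[OF assms] unfolding not_in_BR_iff by blast

lemma set_ideal_BR:
  assumes "infinite (UNIV :: 'a::group_add set)"
  shows "set_ideal (BR :: 'a set set)"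
  unfolding set_ideal_def using BR_Un BR_subset UNIV_notin_BR[OF assms] by blast

lemma translation_invariant_BR: "translation_invariant BR"
  unfolding translation_invariant_def BR_def
  by (simp add: has_rectangle_ltrans_iff has_rectangle_rtrans_iff)

section \<open>Ultrafilters\<close>

definition proper_filter :: "'a set set \<Rightarrow> bool" where
  "proper_filter F \<longleftrightarrow> UNIV \<in> F \<and> {} \<notin> F \<and>
     (\<forall>A B. A \<in> F \<and> A \<subseteq> B \<longrightarrow> B \<in> F) \<and> (\<forall>A B. A \<in> F \<and> B \<in> F \<longrightarrow> A \<inter> B \<in> F)"

lemma is_ultrafilter_iff: "is_ultrafilter p \<longleftrightarrow> proper_filter p \<and> (\<forall>A. A \<in> p \<or> - A \<in> p)"
  unfolding is_ultrafilter_def proper_filter_def by blast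

lemma ultrafilter_Int_iff: "is_ultrafilter p \<Longrightarrow> A \<inter> B \<in> p \<longleftrightarrow> A \<in> p \<and> B \<in> p"
  unfolding is_ultrafilter_def by blast

lemma ultrafilter_Compl_iff: "is_ultrafilter p \<Longrightarrow> - A \<in> p \<longleftrightarrow> A \<notin> p"
  using ultrafilter_Int_iff[of p A "- A"] unfolding is_ultrafilter_def by auto

lemma ultrafilter_INT:
  assumes "is_ultrafilter p" "finite I" "\<forall>i\<in>I. f i \<in> p"
  shows "(\<Inter>i\<in>I. f i) \<in> p"
  using assms(2,3)
  by (induction I rule: finite_induct)
    (use assms(1) in \<open>auto simp: is_ultrafilter_def ultrafilter_Int_iff\<close>)

lemma proper_filter_chain_Union:
  assumes "C \<noteq> {}" and filters: "\<And>F. F \<in> C \<Longrightarrow> proper_filter F"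
    and chain: "\<forall>F\<in>C. \<forall>G\<in>C. F \<subseteq> G \<or> G \<subseteq> F"
  shows "proper_filter (\<Union>C)"
  unfolding proper_filter_def
proof (intro conjI allI impI)
  obtain F where "F \<in> C"
    using assms(1) by blast
  then show "UNIV \<in> \<Union>C"
    using filters unfolding proper_filter_def by blast
  show "{} \<notin> \<Union>C"
    using filters unfolding proper_filter_def by blast
  show "B \<in> \<Union>C" if AB: "A \<in> \<Union>C \<and> A \<subseteq> B" for A B
  proof -
    obtain F where "F \<in> C" "A \<in> F"
      using AB by blast
    moreover from this have "B \<in> F"
      using filters AB unfolding proper_filter_def by blast
    ultimately show ?thesis
      by blast
  qed
  show "A \<inter> B \<in> \<Union>C" if AB: "A \<in> \<Union>C \<and> B \<in> \<Union>C" for A B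
  proof -
    obtain F G where "F \<in> C" "G \<in> C" "A \<in> F" "B \<in> G"
      using AB by blast
    moreover from this have "F \<subseteq> G \<or> G \<subseteq> F"
      using chain by blast
    ultimately obtain H where "H \<in> C" "A \<in> H" "B \<in> H"
      by blast
    moreover from this have "A \<inter> B \<in> H"
      using filters unfolding proper_filter_def by blast
    ultimately show ?thesis
      by blast
  qed
qed

lemma maximal_proper_filter_is_ultrafilter:
  assumes M: "proper_filter M" and maximal: "\<And>G. proper_filter G \<Longrightarrow> M \<subseteq> G \<Longrightarrow> G = M"
  shows "is_ultrafilter M"
  unfolding is_ultrafilter_iff
proof (intro conjI allI M, rule ccontr)
  fix A
  assume neither: "\<not> (A \<in> M \<or> - A \<in> M)"
  define G where "G = {B. \<exists>C\<in>M. C \<inter> A \<subseteq> B}"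
  have "proper_filter G"
    unfolding proper_filter_def
  proof (intro conjI allI impI)
    show "UNIV \<in> G"
      using M unfolding G_def proper_filter_def by blast
    show "{} \<notin> G"
    proof
      assume "{} \<in> G"
      then obtain C where "C \<in> M" "C \<subseteq> - A"
        unfolding G_def by blast
      then show False
        using neither M unfolding proper_filter_def by blast
    qed
    show "B' \<in> G" if "B \<in> G \<and> B \<subseteq> B'" for B B'
      using that unfolding G_def by blast
    show "B \<inter> B' \<in> G" if BB': "B \<in> G \<and> B' \<in> G" for B B'
    proof -
      obtain C C' where "C \<in> M" "C' \<in> M" "C \<inter> A \<subseteq> B" "C' \<inter> A \<subseteq> B'"
        using BB' unfolding G_def by blast
      then have "C \<inter> C' \<in> M" "(C \<inter> C') \<inter> A \<subseteq> B \<inter> B'"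
        using M unfolding proper_filter_def by blast+
      then show ?thesis
        unfolding G_def by blast
    qed
  qed
  moreover have "M \<subseteq> G"
    unfolding G_def by blast
  moreover have "A \<in> G"
    using M unfolding G_def proper_filter_def by blast
  ultimately have "A \<in> M"
    using maximal by metis
  then show False
    using neither by blast
qed

lemma proper_filter_extends_to_ultrafilter:
  assumes "proper_filter F"
  obtains U where "is_ultrafilter U" "F \<subseteq> U"
proof -
  let ?S = "{G. proper_filter G \<and> F \<subseteq> G}"
  have "\<exists>M\<in>?S. \<forall>G\<in>?S. M \<subseteq> G \<longrightarrow> G = M"
  proof (rule subset_Zorn_nonempty)
    show "?S \<noteq> {}"
      using assms by blast
    show "\<Union>C \<in> ?S" if "C \<noteq> {}" "subset.chain ?S C" for C
      using that proper_filter_chain_Union[of C] unfolding subset_chain_def by blast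
  qed
  then obtain M where "proper_filter M" "F \<subseteq> M" "\<And>G. proper_filter G \<Longrightarrow> M \<subseteq> G \<Longrightarrow> G = M"
    by auto
  then show ?thesis
    using that maximal_proper_filter_is_ultrafilter by blast
qed

lemma is_ultrafilter_uprod:
  assumes p: "is_ultrafilter p" and q: "is_ultrafilter q"
  shows "is_ultrafilter (uprod p q)"
proof -
  define P where "P A = {x. {y. x + y \<in> A} \<in> q}" for A :: "'a set"
  have "P UNIV = UNIV" "P {} = {}"
    using q unfolding P_def is_ultrafilter_def by auto
  moreover have "P A \<subseteq> P B" if "A \<subseteq> B" for A B
  proof
    fix x
    assume "x \<in> P A"
    moreover have "{y. x + y \<in> A} \<subseteq> {y. x + y \<in> B}"
      using that by blast
    ultimately show "x \<in> P B"
      using q unfolding P_def is_ultrafilter_def by blast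
  qed
  moreover have "P (A \<inter> B) = P A \<inter> P B" for A B
  proof -
    have "{y. x + y \<in> A \<inter> B} = {y. x + y \<in> A} \<inter> {y. x + y \<in> B}" for x
      by blast
    then show ?thesis
      unfolding P_def by (auto simp: ultrafilter_Int_iff[OF q])
  qed
  moreover have "P (- A) = - P A" for A
  proof -
    have "{y. x + y \<in> - A} = - {y. x + y \<in> A}" for x
      by blast
    then show ?thesis
      unfolding P_def by (auto simp: ultrafilter_Compl_iff[OF q])
  qed
  moreover have "uprod p q = {A. P A \<in> p}"
    unfolding uprod_def P_def ..
  ultimately show ?thesis
    using p unfolding is_ultrafilter_def by (simp add: ultrafilter_Int_iff[OF p]) metis
qed

section \<open>The closed ideal \<open>BR\<^sup>\<and>\<close> of \<open>\<beta>G\<close>\<close>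

lemma beta_closed_hat: "beta_closed (hat I)"
  unfolding beta_closed_def
proof (intro conjI ballI impI)
  show "hat I \<subseteq> betaG"
    unfolding hat_def by blast
  fix p
  assume "p \<in> betaG" "p \<notin> hat I"
  then obtain A where "A \<in> I" "A \<in> p"
    using ultrafilter_Compl_iff unfolding hat_def betaG_def by blast
  then show "\<exists>A\<in>p. \<forall>q\<in>hat I. A \<notin> q"
    using ultrafilter_Compl_iff unfolding hat_def betaG_def by blast
qed

lemma mem_hat_iff: "p \<in> betaG \<Longrightarrow> p \<in> hat I \<longleftrightarrow> p \<inter> I = {}"
  unfolding hat_def betaG_def using ultrafilter_Compl_iff by blast

lemma hat_nonempty:
  assumes I: "set_ideal I" and "{} \<in> I"
  shows "hat I \<noteq> {}"
proof -
  have "proper_filter {B. - B \<in> I}"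
    unfolding proper_filter_def
  proof (intro conjI allI impI)
    show "UNIV \<in> {B. - B \<in> I}" "{} \<notin> {B. - B \<in> I}"
      using assms unfolding set_ideal_def by auto
    show "B' \<in> {B. - B \<in> I}" if "B \<in> {B. - B \<in> I} \<and> B \<subseteq> B'" for B B'
    proof -
      have "- B \<in> I" "- B' \<subseteq> - B"
        using that by auto
      then show ?thesis
        using I unfolding set_ideal_def by blast
    qed
    show "B \<inter> B' \<in> {B. - B \<in> I}" if "B \<in> {B. - B \<in> I} \<and> B' \<in> {B. - B \<in> I}" for B B'
    proof -
      have "- B \<union> - B' \<in> I"
        using that I unfolding set_ideal_def by blast
      then show ?thesis
        by (simp add: Compl_Int)
    qed
  qed
  then obtain U where "is_ultrafilter U" "{B. - B \<in> I} \<subseteq> U"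
    by (rule proper_filter_extends_to_ultrafilter)
  then have "U \<in> hat I"
    unfolding hat_def betaG_def by auto
  then show ?thesis
    by blast
qed

lemma semigroup_ideal_hat:
  fixes I :: "'a::group_add set set"
  assumes "set_ideal I" "{} \<in> I"
    and ltrans_closed: "\<And>A g. A \<in> I \<Longrightarrow> ltrans g A \<in> I"
    and shift_closed: "\<And>A q. A \<in> I \<Longrightarrow> is_ultrafilter q \<Longrightarrow> {x. {y. x + y \<in> A} \<in> q} \<in> I"
  shows "semigroup_ideal (hat I)"
  unfolding semigroup_ideal_def
proof (intro conjI ballI)
  show "hat I \<subseteq> betaG"
    unfolding hat_def by blast
  show "hat I \<noteq> {}"
    using hat_nonempty assms(1,2) .
  fix p q :: "'a set set"
  assume p: "p \<in> betaG" and q: "q \<in> hat I"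
  then have p_uf: "is_ultrafilter p" and q_uf: "is_ultrafilter q"
    unfolding hat_def betaG_def by auto
  have compl_shift: "{y. x + y \<in> - A} = - {y. x + y \<in> A}" for x and A :: "'a set"
    by blast
  show "uprod p q \<in> hat I"
    unfolding hat_def betaG_def
  proof (intro CollectI conjI ballI)
    show "is_ultrafilter (uprod p q)"
      using p_uf q_uf by (rule is_ultrafilter_uprod)
    fix A
    assume "A \<in> I"
    then have "- ltrans (- x) A \<in> q" for x
      using q ltrans_closed unfolding hat_def by blast
    then have "{y. x + y \<in> - A} \<in> q" for x
      by (simp only: compl_shift ltrans_minus)
    then show "- A \<in> uprod p q"
      using p_uf unfolding uprod_def is_ultrafilter_def by simp
  qed
  show "uprod q p \<in> hat I"
    unfolding hat_def betaG_def
  proof (intro CollectI conjI ballI)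
    show "is_ultrafilter (uprod q p)"
      using q_uf p_uf by (rule is_ultrafilter_uprod)
    fix A
    assume "A \<in> I"
    then have "- {x. {y. x + y \<in> A} \<in> p} \<in> q"
      using q p_uf shift_closed unfolding hat_def by blast
    then show "- A \<in> uprod q p"
      unfolding uprod_def compl_shift by (simp add: ultrafilter_Compl_iff[OF p_uf] Collect_neg_eq)
  qed
qed

lemma has_rectangle_ultrafilter_shift:
  assumes q: "is_ultrafilter q" and "has_rectangle {x. {y. x + y \<in> A} \<in> q} n m"
  shows "has_rectangle A n m"
proof -
  obtain X Y where XY: "finite X" "finite Y" "card X = n" "card Y = m"
      and sub: "setprod X Y \<subseteq> {x. {y. x + y \<in> A} \<in> q}"
    using assms(2) unfolding has_rectangle_def by blast
  have "(\<Inter>z\<in>setprod X Y. {y. z + y \<in> A}) \<in> q"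
    using sub by (intro ultrafilter_INT[OF q finite_setprod[OF XY(1,2)]]) blast
  moreover have "{} \<notin> q"
    using q unfolding is_ultrafilter_def by blast
  ultimately obtain w where "w \<in> (\<Inter>z\<in>setprod X Y. {y. z + y \<in> A})"
    by (metis ex_in_conv)
  then have "setprod X (rtrans Y w) \<subseteq> A"
    unfolding setprod_rtrans by (auto simp: rtrans_def)
  then show ?thesis
    unfolding has_rectangle_def using XY by (intro exI[of _ X] exI[of _ "rtrans Y w"]) simp
qed

lemma ultrafilter_shift_in_BR:
  "A \<in> BR \<Longrightarrow> is_ultrafilter q \<Longrightarrow> {x. {y. x + y \<in> A} \<in> q} \<in> BR"
  unfolding BR_def using has_rectangle_ultrafilter_shift by blast

lemma hat_BR_iff: "p \<in> betaG \<Longrightarrow> p \<in> hat BR \<longleftrightarrow> (\<forall>P\<in>p. \<forall>n. has_rectangle P n n)"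
  using not_in_BR_iff by (auto simp: mem_hat_iff)

section \<open>\<open>BR\<close> is a proper subfamily of \<open>FT\<close>\<close>

lemma has_rectangle_if_not_thin:
  assumes "\<not> thin n A"
  shows "has_rectangle A (Suc n) k"
proof -
  obtain F where F: "finite F" "card F = Suc n" and "infinite (\<Inter>g\<in>F. ltrans g A)"
    using assms unfolding thin_def by blast
  then obtain Y where Y: "finite Y" "card Y = k" "Y \<subseteq> (\<Inter>g\<in>F. ltrans g A)"
    using infinite_arbitrarily_large by blast
  have "setprod (uminus ` F) Y \<subseteq> A"
    using Y(3) ltrans_minus[of "- g" A for g] unfolding setprod_def by auto
  moreover have "card (uminus ` F) = Suc n"
    using F by (simp add: card_image)
  ultimately show ?thesis
    unfolding has_rectangle_def using F Y by blast
qed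

lemma BR_subset_FT: "BR \<subseteq> FT"
proof
  fix A :: "'a set"
  assume "A \<in> BR"
  then obtain n where n: "\<not> has_rectangle A n n"
    unfolding BR_def by blast
  then obtain m where "n = Suc m"
    using has_rectangle_0 by (cases n) auto
  then have "thin m A"
    using n has_rectangle_if_not_thin by blast
  then show "A \<in> FT"
    unfolding FT_def by blast
qed

lemma thin_1_if_finite_difference_representations:
  assumes "\<And>h. h \<noteq> 0 \<Longrightarrow> finite {a \<in> A. \<exists>b\<in>A. b - a = h}"
  shows "thin 1 A"
  unfolding thin_def
proof (intro allI impI)
  fix F :: "'a set"
  assume "finite F \<and> card F = Suc 1"
  then obtain g0 g1 where F: "F = {g0, g1}" "g0 \<noteq> g1"
    by (metis One_nat_def Suc_1 card_2_iff)
  define h where "h = - g1 + g0"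
  have "h \<noteq> 0"
    using F(2) unfolding h_def by (metis add_minus_cancel add_0_right)
  have "(\<Inter>g\<in>F. ltrans g A) \<subseteq> ltrans g0 {a \<in> A. \<exists>b\<in>A. b - a = h}"
  proof
    fix z
    assume "z \<in> (\<Inter>g\<in>F. ltrans g A)"
    then obtain a b where ab: "a \<in> A" "b \<in> A" "z = g0 + a" "z = g1 + b"
      using F(1) unfolding ltrans_def by blast
    then have "b = h + a"
      unfolding h_def by (metis add.assoc minus_add_cancel)
    then have "b - a = h"
      by simp
    then show "z \<in> ltrans g0 {a \<in> A. \<exists>b\<in>A. b - a = h}"
      using ab unfolding ltrans_def by blast
  qed
  then show "finite (\<Inter>g\<in>F. ltrans g A)"
    by (rule finite_subset) (simp add: assms[OF \<open>h \<noteq> 0\<close>])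
qed

definition differences :: "'a::group_add set \<Rightarrow> 'a set" where
  "differences B = {u - v | u v. u \<in> B \<and> v \<in> B}"

lemma finite_differences:
  assumes "finite B"
  shows "finite (differences B)"
proof -
  have "differences B = (\<lambda>(u, v). u - v) ` (B \<times> B)"
    unfolding differences_def by auto
  then show ?thesis
    using assms by simp
qed

lemma differences_mono: "B \<subseteq> C \<Longrightarrow> differences B \<subseteq> differences C"
  unfolding differences_def by blast

lemma minus_in_differences: "h \<in> differences B \<Longrightarrow> - h \<in> differences B"
  unfolding differences_def using minus_diff_eq by blast

lemma exists_set_avoiding_differences:
  assumes "infinite (UNIV :: 'a::group_add set)" "finite S" "finite E"
  shows "\<exists>Y :: 'a set. finite Y \<and> card Y = k \<and> Y \<inter> E = {} \<and>
    (\<forall>y\<in>Y. \<forall>y'\<in>Y. y \<noteq> y' \<longrightarrow> y - y' \<notin> S)"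
proof (induction k)
  case 0
  show ?case
    by (intro exI[of _ "{}"]) simp
next
  case (Suc k)
  then obtain Y where Y: "finite Y" "card Y = k" "Y \<inter> E = {}"
      "\<forall>y\<in>Y. \<forall>y'\<in>Y. y \<noteq> y' \<longrightarrow> y - y' \<notin> S"
    by blast
  let ?bad = "E \<union> Y \<union> (\<Union>v\<in>Y. (\<lambda>s. s + v) ` S \<union> (\<lambda>s. - s + v) ` S)"
  have "finite ?bad"
    using assms(2,3) Y(1) by simp
  then have "\<exists>u. u \<notin> ?bad"
    by (rule ex_new_if_finite[OF assms(1)])
  then obtain u where "u \<notin> ?bad" ..
  then have u: "u \<notin> E" "u \<notin> Y" "\<And>v s. v \<in> Y \<Longrightarrow> s \<in> S \<Longrightarrow> u \<noteq> s + v \<and> u \<noteq> - s + v"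
    by auto
  have fresh: "u - v \<notin> S" "v - u \<notin> S" if "v \<in> Y" for v
  proof -
    have "u = (u - v) + v" "u = - (v - u) + v"
      by (simp_all add: minus_diff_eq)
    then show "u - v \<notin> S" "v - u \<notin> S"
      using u(3)[OF that] by metis+
  qed
  have "\<forall>y\<in>insert u Y. \<forall>y'\<in>insert u Y. y \<noteq> y' \<longrightarrow> y - y' \<notin> S"
    using Y(4) fresh by blast
  moreover have "card (insert u Y) = Suc k" "insert u Y \<inter> E = {}"
    using Y(1-3) u(1,2) by auto
  ultimately show ?case
    using Y(1) by (intro exI[of _ "insert u Y"]) simp
qed

definition fresh_block :: "'a::group_add set \<Rightarrow> nat \<Rightarrow> 'a set \<Rightarrow> bool" where
  "fresh_block B k R \<longleftrightarrow> finite R \<and> has_rectangle R k k \<and>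
     (\<forall>a\<in>R. \<forall>b\<in>B \<union> R. a \<noteq> b \<longrightarrow> a - b \<notin> differences B)"

lemma fresh_block_exists:
  assumes inf: "infinite (UNIV :: 'a::group_add set)" and "finite (B :: 'a set)"
  shows "\<exists>R. fresh_block B k R"
proof -
  let ?D = "differences B"
  have "finite ?D"
    using assms(2) by (rule finite_differences)
  obtain X :: "'a set" where X: "finite X" "card X = k"
      "\<And>x x'. x \<in> X \<Longrightarrow> x' \<in> X \<Longrightarrow> x \<noteq> x' \<Longrightarrow> x - x' \<notin> ?D"
    using exists_set_avoiding_differences[OF inf \<open>finite ?D\<close> finite.emptyI, of k] by blast
  define S where "S = (\<lambda>(x, x', d). - x + d + x') ` (X \<times> X \<times> ?D)"
  define E where "E = (\<lambda>(x, d, b). - x + (d + b)) ` (X \<times> ?D \<times> B)"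
  have "finite S" "finite E"
    unfolding S_def E_def using X(1) \<open>finite ?D\<close> assms(2) by simp_all
  from exists_set_avoiding_differences[OF inf this, of k]
  obtain Y :: "'a set" where Y: "finite Y" "card Y = k" "Y \<inter> E = {}"
      "\<And>y y'. y \<in> Y \<Longrightarrow> y' \<in> Y \<Longrightarrow> y \<noteq> y' \<Longrightarrow> y - y' \<notin> S"
    by blast
  have "a - b \<notin> ?D" if ab: "a \<in> setprod X Y" "b \<in> B \<union> setprod X Y" "a \<noteq> b" for a b
  proof
    assume d: "a - b \<in> ?D"
    obtain x y where xy: "a = x + y" "x \<in> X" "y \<in> Y"
      using ab(1) unfolding setprod_def by blast
    consider "b \<in> B" | x' y' where "b = x' + y'" "x' \<in> X" "y' \<in> Y"
      using ab(2) unfolding setprod_def by blast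
    then show False
    proof cases
      case 1
      have "y = - x + ((a - b) + b)"
        using xy(1) by auto
      then have "y \<in> E"
        unfolding E_def using xy(2) d 1 by (intro image_eqI[of _ _ "(x, a - b, b)"]) auto
      then show False
        using Y(3) xy(3) by blast
    next
      case (2 x' y')
      show False
      proof (cases "y = y'")
        case True
        then have "a - b = x - x'" "x \<noteq> x'"
          using xy(1) 2(1) ab(3) by (simp_all add: diff_add_eq_diff_diff_swap)
        then show False
          using X(3) xy(2) 2(2) d by metis
      next
        case False
        have "y - y' = - x + (a - b) + x'"
          using xy(1) 2(1)
          by (metis add_diff_eq diff_add_cancel diff_add_eq_diff_diff_swap minus_add_cancel)
        then have "y - y' \<in> S"
          unfolding S_def using xy(2) 2(2) d by (intro image_eqI[of _ _ "(x, x', a - b)"]) auto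
        then show False
          using Y(4) xy(3) 2(3) False by blast
      qed
    qed
  qed
  moreover have "has_rectangle (setprod X Y) k k"
    unfolding has_rectangle_def using X(1,2) Y(1,2) by blast
  ultimately have "fresh_block B k (setprod X Y)"
    unfolding fresh_block_def using finite_setprod X(1) Y(1) by blast
  then show ?thesis
    by blast
qed

primrec fresh_chain :: "nat \<Rightarrow> 'a::group_add set" where
  "fresh_chain 0 = {}"
| "fresh_chain (Suc k) = fresh_chain k \<union> (SOME R. fresh_block (fresh_chain k) k R)"

lemma fresh_chain_mono: "i \<le> j \<Longrightarrow> fresh_chain i \<subseteq> fresh_chain j"
  by (rule lift_Suc_mono_le[of fresh_chain]) auto

lemma fresh_block_some:
  fixes B :: "'a::group_add set"
  assumes "infinite (UNIV :: 'a set)" "finite B"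
  shows "fresh_block B k (SOME R. fresh_block B k R)"
  using fresh_block_exists[OF assms] by (rule someI_ex)

lemma finite_fresh_chain:
  assumes "infinite (UNIV :: 'a::group_add set)"
  shows "finite (fresh_chain k :: 'a set)"
  by (induction k) (auto dest: fresh_block_some[OF assms] simp: fresh_block_def)

lemma fresh_chain_Suc:
  assumes "infinite (UNIV :: 'a::group_add set)"
  obtains R :: "'a::group_add set"
  where "fresh_chain (Suc k) = fresh_chain k \<union> R" "fresh_block (fresh_chain k) k R"
  using fresh_block_some[OF assms finite_fresh_chain[OF assms]] by simp

lemma fresh_chain_difference_representations:
  assumes inf: "infinite (UNIV :: 'a::group_add set)"
    and h: "h \<noteq> 0" "h \<in> differences (fresh_chain K :: 'a set)"
    and "a \<in> fresh_chain j" "b \<in> fresh_chain j" "b - a = h"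
  shows "a \<in> fresh_chain K \<and> b \<in> fresh_chain K"
  using assms(4-6)
proof (induction j)
  case 0
  then show ?case
    by simp
next
  case (Suc j)
  obtain R :: "'a set" where R: "fresh_chain (Suc j) = fresh_chain j \<union> R" "fresh_block (fresh_chain j) j R"
    using fresh_chain_Suc[OF inf] .
  show ?case
  proof (cases "j < K")
    case True
    then show ?thesis
      using Suc.prems(1,2) fresh_chain_mono[of "Suc j" K] by auto
  next
    case False
    then have old: "h \<in> differences (fresh_chain j)"
      using h(2) differences_mono[OF fresh_chain_mono[of K j]] by auto
    have "a \<in> fresh_chain j \<and> b \<in> fresh_chain j"
    proof (rule ccontr)
      assume "\<not> (a \<in> fresh_chain j \<and> b \<in> fresh_chain j)"
      then have "a \<in> R \<or> b \<in> R"
        using Suc.prems(1,2) R(1) by blast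
      moreover have "a \<noteq> b" "a - b = - h"
        using Suc.prems(3) h(1) by (auto simp: minus_diff_eq)
      moreover have "a \<in> fresh_chain j \<union> R" "b \<in> fresh_chain j \<union> R"
        using Suc.prems(1,2) R(1) by auto
      ultimately show False
        using R(2) old minus_in_differences Suc.prems(3) unfolding fresh_block_def by metis
    qed
    then show ?thesis
      using Suc.IH Suc.prems(3) by blast
  qed
qed

lemma exists_thin_set_with_all_rectangles:
  assumes inf: "infinite (UNIV :: 'a::group_add set)"
  shows "\<exists>A :: 'a set. thin 1 A \<and> (\<forall>n. has_rectangle A n n)"
proof (intro exI conjI allI)
  let ?A = "\<Union>k. fresh_chain k :: 'a set"
  show "has_rectangle ?A n n" for n
  proof -
    obtain R :: "'a set" where "fresh_chain (Suc n) = fresh_chain n \<union> R" "fresh_block (fresh_chain n) n R"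
      using fresh_chain_Suc[OF inf] .
    then show ?thesis
      unfolding fresh_block_def by (metis UN_upper UNIV_I has_rectangle_subset le_supE order_refl)
  qed
  show "thin 1 ?A"
  proof (rule thin_1_if_finite_difference_representations)
    fix h :: 'a
    assume "h \<noteq> 0"
    show "finite {a \<in> ?A. \<exists>b\<in>?A. b - a = h}"
    proof (cases "\<exists>a\<in>?A. \<exists>b\<in>?A. b - a = h")
      case False
      then have "{a \<in> ?A. \<exists>b\<in>?A. b - a = h} = {}"
        by blast
      then show ?thesis
        by (metis finite.emptyI)
    next
      case True
      then obtain a0 b0 i j where "a0 \<in> fresh_chain i" "b0 \<in> fresh_chain j" "b0 - a0 = h"
        by blast
      then have "h \<in> differences (fresh_chain (max i j))"
        unfolding differences_def using fresh_chain_mono[of i "max i j"] fresh_chain_mono[of j "max i j"]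
        by auto
      have "{a \<in> ?A. \<exists>b\<in>?A. b - a = h} \<subseteq> fresh_chain (max i j)"
      proof
        fix a
        assume "a \<in> {a \<in> ?A. \<exists>b\<in>?A. b - a = h}"
        then obtain b i' j' where "a \<in> fresh_chain i'" "b \<in> fresh_chain j'" "b - a = h"
          by blast
        then show "a \<in> fresh_chain (max i j)"
          using fresh_chain_difference_representations[OF inf \<open>h \<noteq> 0\<close> \<open>h \<in> differences _\<close>,
              of a "max i' j'" b]
            fresh_chain_mono[of i' "max i' j'"] fresh_chain_mono[of j' "max i' j'"] by auto
      qed
      then show ?thesis
        using finite_fresh_chain[OF inf] finite_subset by blast
    qed
  qed
qed

lemma BR_psubset_FT:
  assumes "infinite (UNIV :: 'a::group_add set)"
  shows "(BR :: 'a set set) \<subset> FT"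
proof -
  obtain A :: "'a set" where "thin 1 A" "\<forall>n. has_rectangle A n n"
    using exists_thin_set_with_all_rectangles[OF assms] by blast
  then have "A \<in> FT - BR"
    unfolding FT_def not_in_BR_iff[symmetric] by blast
  then show ?thesis
    using BR_subset_FT by blast
qed

theorem theorem6p7:
  assumes "infinite (UNIV :: 'a::group_add set)"
  shows "set_ideal (BR :: 'a set set) \<and> translation_invariant (BR :: 'a set set)
    \<and> beta_closed (hat (BR :: 'a set set)) \<and> semigroup_ideal (hat (BR :: 'a set set))
    \<and> (\<forall>p\<in>betaG. p \<in> hat (BR :: 'a set set) \<longleftrightarrow> (\<forall>P\<in>p. \<forall>n. has_rectangle P n n))
    \<and> (BR :: 'a set set) \<subset> FT"
proof (intro conjI ballI)
  show "set_ideal (BR :: 'a set set)"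
    using assms by (rule set_ideal_BR)
  show "translation_invariant (BR :: 'a set set)"
    by (rule translation_invariant_BR)
  show "beta_closed (hat (BR :: 'a set set))"
    by (rule beta_closed_hat)
  show "semigroup_ideal (hat (BR :: 'a set set))"
    using set_ideal_BR[OF assms] empty_in_BR translation_invariant_BR ultrafilter_shift_in_BR
    unfolding translation_invariant_def by (intro semigroup_ideal_hat) auto
  show "p \<in> hat (BR :: 'a set set) \<longleftrightarrow> (\<forall>P\<in>p. \<forall>n. has_rectangle P n n)" if "p \<in> betaG" for p
    using that by (rule hat_BR_iff)
  show "(BR :: 'a set set) \<subset> FT"
    using assms by (rule BR_psubset_FT)
qed

end
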